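(* Suppose that $\varphi,\psi\in\boldsymbol{\mathcal X}_N$ satisfy $\mathrm{dist}_\infty(\operatorname{supp} \varphi, \operatorname{supp} \psi) > l-1$. Then \begin{equation} \langle \mathscr{T} \varphi, \psi \rangle = 0, \quad \langle \mathscr{T}' \varphi, \psi \rangle = 0, \quad \langle \mathscr{R} \varphi, \psi \rangle = 0, \quad \langle \mathscr{R}' \varphi, \psi \rangle = 0. \end{equation}
   Context: Let $L\ge 3$ be an odd integer, $N\ge 1$ an integer, $d\ge 2$, $m\ge1$, and let $\mathbb T_N=(\mathbb Z/L^N\mathbb Z)^d$ be the discrete torus, with the distance $\rho_\infty(x,y)=\inf\{|x-y+z|_\infty : z\in (L^N\mathbb Z)^d\}$ and, for sets $M_1,M_2\subset\mathbb T_N$, $\mathrm{dist}_\infty(M_1,M_2)=\min\{\rho_\infty(x,y): x\in M_1, y\in M_2\}$. Let $\boldsymbol{\mathcal X}_N$ be the space of functions $\varphi:\mathbb T_N\to\mathbb R^m$ with $\sum_{x\in\mathbb T_N}\varphi(x)=0$, with scalar product $\langle\varphi,\psi\rangle=\sum_{x\in\mathbb T_N}\langle\varphi(x),\psi(x)\rangle_{\mathbb R^m}$. Let $(\nabla\varphi)^r_j(x)=\varphi^r(x+e_j)-\varphi^r(x)$ and $(\nabla^*\varphi)^r_j(x)=\varphi^r(x-e_j)-\varphi^r(x)$. Let $A:\mathbb R^{m\times d}\to\mathbb R^{m\times d}$ be linear, symmetric and positive definite, define $(\varphi,\psi)_+=\sum_{x\in\mathbb T_N}\langle A\nabla\varphi(x),\nabla\psi(x)\rangle_{\mathbb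 R^{m\times d}}$ (a scalar product on $\boldsymbol{\mathcal X}_N$; the resulting Hilbert space is $\boldsymbol{\mathcal H}_+$) and $\mathscr A=\nabla^*A\nabla$, so that $\langle\mathscr A\varphi,\psi\rangle=(\varphi,\psi)_+$. Let $l\ge 3$ be an integer with $l-1<L^N$, $Q=\{1,\ldots,l-1\}^d\subset\mathbb T_N$, and for $x\in\mathbb T_N$ let $\boldsymbol{\mathcal H}_+(Q+x)=\{\varphi\in\boldsymbol{\mathcal X}_N:\varphi=0 \text{ on } \mathbb T_N\setminus(Q+x)\}$. Let $\varPi_x$ be the $(\cdot,\cdot)_+$-orthogonal projection of $\boldsymbol{\mathcal H}_+$ onto $\boldsymbol{\mathcal H}_+(Q+x)$. Define $\mathscr T=l^{-d}\sum_{x\in\mathbb T_N}\varPi_x$, its dual $\mathscr T'$ with respect to $\langle\cdot,\cdot\rangle$ (i.e. $\langle\mathscr T'\varphi,\psi\rangle=\langle\varphi,\mathscr T\psi\rangle$; equivalently $\mathscr T'=\mathscr A\mathscr T\mathscr A^{-1}$), $\mathscr R=\mathrm{id}-\mathscr T$ and $\mathscr R'=\mathrm{id}-\mathscr T'$. *)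

theory Defs
  imports "HOL-Analysis.Analysis"
begin

text \<open>Discrete torus (Z / M Z)^d with M = L^N, points represented by their
  canonical representatives in {0..<M}^d; the dimension d is CARD('d).
  Fields take values in R^m with m = CARD('m); matrices in R^{m x d} are
  real^'d^'m (row index r :: 'm, column index j :: 'd).\<close>

definition torus :: "int \<Rightarrow> (int^'d) set" where
  "torus M = {x. \<forall>j. 0 \<le> x$j \<and> x$j < M}"

definition tadd :: "int \<Rightarrow> int^'d \<Rightarrow> int^'d \<Rightarrow> int^'d" where
  "tadd M x y = (\<chi> j. (x$j + y$j) mod M)"

definition rho_inf :: "int \<Rightarrow> int^'d \<Rightarrow> int^'d \<Rightarrow> int" where
  "rho_inf M x y = Inf {Max (range (\<lambda>j. \<bar>x$j - y$j + z$j\<bar>)) | z. \<forall>j. M dvd z$j}"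

definition dist_inf :: "int \<Rightarrow> (int^'d) set \<Rightarrow> (int^'d) set \<Rightarrow> int" where
  "dist_inf M S1 S2 = Min {rho_inf M x y | x y. x \<in> S1 \<and> y \<in> S2}"

definition XN :: "int \<Rightarrow> (int^'d \<Rightarrow> real^'m) set" where
  "XN M = {\<phi>. (\<forall>x. x \<notin> torus M \<longrightarrow> \<phi> x = 0) \<and> (\<Sum>x\<in>torus M. \<phi> x) = 0}"

definition supp :: "int \<Rightarrow> (int^'d \<Rightarrow> real^'m) \<Rightarrow> (int^'d) set" where
  "supp M \<phi> = {x \<in> torus M. \<phi> x \<noteq> 0}"

definition ip :: "int \<Rightarrow> (int^'d \<Rightarrow> real^'m) \<Rightarrow> (int^'d \<Rightarrow> real^'m) \<Rightarrow> real" where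
  "ip M \<phi> \<psi> = (\<Sum>x\<in>torus M. \<phi> x \<bullet> \<psi> x)"

definition grad :: "int \<Rightarrow> (int^'d \<Rightarrow> real^'m) \<Rightarrow> int^'d \<Rightarrow> real^'d^'m" where
  "grad M \<phi> x = (\<chi> r j. \<phi> (tadd M x (axis j 1)) $ r - \<phi> x $ r)"

definition ipA :: "int \<Rightarrow> (real^'d^'m \<Rightarrow> real^'d^'m) \<Rightarrow>
    (int^'d \<Rightarrow> real^'m) \<Rightarrow> (int^'d \<Rightarrow> real^'m) \<Rightarrow> real" where
  "ipA M A \<phi> \<psi> = (\<Sum>x\<in>torus M. A (grad M \<phi> x) \<bullet> grad M \<psi> x)"

definition cubeQ :: "nat \<Rightarrow> (int^'d) set" where
  "cubeQ l = {y. \<forall>j. 1 \<le> y$j \<and> y$j \<le> int l - 1}"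

definition shiftQ :: "int \<Rightarrow> nat \<Rightarrow> int^'d \<Rightarrow> (int^'d) set" where
  "shiftQ M l x = (\<lambda>y. tadd M y x) ` cubeQ l"

definition Hloc :: "int \<Rightarrow> nat \<Rightarrow> int^'d \<Rightarrow> (int^'d \<Rightarrow> real^'m) set" where
  "Hloc M l x = {\<phi> \<in> XN M. \<forall>y \<in> torus M - shiftQ M l x. \<phi> y = 0}"

definition Pi_proj :: "int \<Rightarrow> nat \<Rightarrow> (real^'d^'m \<Rightarrow> real^'d^'m) \<Rightarrow> int^'d \<Rightarrow>
    (int^'d \<Rightarrow> real^'m) \<Rightarrow> (int^'d \<Rightarrow> real^'m)" where
  "Pi_proj M l A x \<phi> = (THE \<psi>. \<psi> \<in> Hloc M l x \<and>
      (\<forall>\<zeta> \<in> Hloc M l x. ipA M A (\<lambda>y. \<phi> y - \<psi> y) \<zeta> = 0))"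

definition opT :: "int \<Rightarrow> nat \<Rightarrow> (real^'d^'m \<Rightarrow> real^'d^'m) \<Rightarrow>
    (int^'d \<Rightarrow> real^'m) \<Rightarrow> (int^'d \<Rightarrow> real^'m)" where
  "opT M l A \<phi> = (\<lambda>y. (1 / real l ^ CARD('d)) *\<^sub>R
      (\<Sum>x\<in>torus M. Pi_proj M l A x \<phi> y))"

definition opT' :: "int \<Rightarrow> nat \<Rightarrow> (real^'d^'m \<Rightarrow> real^'d^'m) \<Rightarrow>
    (int^'d \<Rightarrow> real^'m) \<Rightarrow> (int^'d \<Rightarrow> real^'m)" where
  "opT' M l A \<phi> = (THE \<eta>. \<eta> \<in> XN M \<and>
      (\<forall>\<psi> \<in> XN M. ip M \<eta> \<psi> = ip M \<phi> (opT M l A \<psi>)))"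

definition opR :: "int \<Rightarrow> nat \<Rightarrow> (real^'d^'m \<Rightarrow> real^'d^'m) \<Rightarrow>
    (int^'d \<Rightarrow> real^'m) \<Rightarrow> (int^'d \<Rightarrow> real^'m)" where
  "opR M l A \<phi> = (\<lambda>y. \<phi> y - opT M l A \<phi> y)"

definition opR' :: "int \<Rightarrow> nat \<Rightarrow> (real^'d^'m \<Rightarrow> real^'d^'m) \<Rightarrow>
    (int^'d \<Rightarrow> real^'m) \<Rightarrow> (int^'d \<Rightarrow> real^'m)" where
  "opR' M l A \<phi> = (\<lambda>y. \<phi> y - opT' M l A \<phi> y)"

end

theory Submission
  imports Defs
begin

text \<open>If \<open>supp \<psi>\<close> meets the cube \<open>Q + x\<close>, then \<open>\<Pi>\<^sub>x \<phi> = 0\<close>: for a test field \<open>\<zeta>\<close> on \<open>Q + x\<close>,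
  the form \<open>(\<phi>, \<zeta>)\<^sub>+\<close> only sees values \<open>\<phi>(z + e)\<close>, \<open>e \<in> {0,1}\<^sup>d\<close>, at sites \<open>z\<close> with some
  \<open>z + d \<in> Q + x\<close>, and such points are within \<open>\<rho>\<^sub>\<infinity>\<close>-distance \<open>l - 1\<close> of all of \<open>Q + x\<close>,
  hence outside \<open>supp \<phi>\<close>. Otherwise \<open>\<Pi>\<^sub>x \<phi>\<close> vanishes off \<open>Q + x\<close>, in particular on \<open>supp \<psi>\<close>.
  Either way \<open>\<langle>\<Pi>\<^sub>x \<phi>, \<psi>\<rangle> = 0\<close>, and summing over \<open>x\<close> gives \<open>\<langle>T \<phi>, \<psi>\<rangle> = 0\<close>. Since the
  hypothesis is symmetric in \<open>\<phi>\<close> and \<open>\<psi>\<close>, duality \<open>\<langle>T' \<phi>, \<psi>\<rangle> = \<langle>T \<psi>, \<phi>\<rangle>\<close> handles \<open>T'\<close>,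
  and \<open>R\<close>, \<open>R'\<close> follow from \<open>\<langle>\<phi>, \<psi>\<rangle> = 0\<close>.

  That \<open>\<Pi>\<^sub>x\<close> and \<open>T'\<close> are well defined is a finite-dimensional Riesz representation theorem,
  proved by induction on the set of coordinates a field may use, one Gram--Schmidt step per
  new coordinate.\<close>

section \<open>Finite-dimensional Riesz representation\<close>

definition coord_fields :: "('a \<times> 'm) set \<Rightarrow> ('a \<Rightarrow> real^'m) set" where
  "coord_fields P = {\<phi>. \<forall>t r. \<phi> t $ r \<noteq> 0 \<longrightarrow> (t, r) \<in> P}"

lemma coord_fields_combine:
  "a \<in> coord_fields P \<Longrightarrow> b \<in> coord_fields P \<Longrightarrow> (\<lambda>y. a y + c *\<^sub>R b y) \<in> coord_fields P"
  unfolding coord_fields_def by (auto; metis add_0 mult_zero_right)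

lemma coord_fields_mono: "P \<subseteq> Q \<Longrightarrow> coord_fields P \<subseteq> coord_fields Q"
  unfolding coord_fields_def by auto

definition linear_functional_on :: "('a \<Rightarrow> real^'m) set \<Rightarrow> (('a \<Rightarrow> real^'m) \<Rightarrow> real) \<Rightarrow> bool" where
  "linear_functional_on V f \<longleftrightarrow>
     (\<forall>a\<in>V. \<forall>b\<in>V. f (\<lambda>y. a y + b y) = f a + f b) \<and> (\<forall>a\<in>V. \<forall>k. f (\<lambda>y. k *\<^sub>R a y) = k * f a)"

locale sym_pos_form =
  fixes V :: "('a \<Rightarrow> real^'m) set" and B :: "('a \<Rightarrow> real^'m) \<Rightarrow> ('a \<Rightarrow> real^'m) \<Rightarrow> real"
  assumes zero_mem: "(\<lambda>y. 0) \<in> V"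
    and add_mem: "\<And>a b. a \<in> V \<Longrightarrow> b \<in> V \<Longrightarrow> (\<lambda>y. a y + b y) \<in> V"
    and scale_mem: "\<And>a k. a \<in> V \<Longrightarrow> (\<lambda>y. k *\<^sub>R a y) \<in> V"
    and add_left: "\<And>a b c. a \<in> V \<Longrightarrow> b \<in> V \<Longrightarrow> c \<in> V \<Longrightarrow>
      B (\<lambda>y. a y + b y) c = B a c + B b c"
    and scale_left: "\<And>a c k. a \<in> V \<Longrightarrow> c \<in> V \<Longrightarrow> B (\<lambda>y. k *\<^sub>R a y) c = k * B a c"
    and commute: "\<And>a b. a \<in> V \<Longrightarrow> b \<in> V \<Longrightarrow> B a b = B b a"
    and definite: "\<And>a. a \<in> V \<Longrightarrow> B a a = 0 \<Longrightarrow> a = (\<lambda>y. 0)"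
begin

lemma combine_mem: "a \<in> V \<Longrightarrow> b \<in> V \<Longrightarrow> (\<lambda>y. a y + c *\<^sub>R b y) \<in> V"
  by (simp add: add_mem scale_mem)

lemma combine_left: "a \<in> V \<Longrightarrow> b \<in> V \<Longrightarrow> d \<in> V \<Longrightarrow> B (\<lambda>y. a y + c *\<^sub>R b y) d = B a d + c * B b d"
  by (simp add: add_left scale_left scale_mem)

lemma combine_right:
  assumes "a \<in> V" and "b \<in> V" and "d \<in> V"
  shows "B d (\<lambda>y. a y + c *\<^sub>R b y) = B d a + c * B d b"
proof -
  have "B d (\<lambda>y. a y + c *\<^sub>R b y) = B (\<lambda>y. a y + c *\<^sub>R b y) d"
    using assms by (intro commute combine_mem)
  also have "\<dots> = B a d + c * B b d"
    using assms by (rule combine_left)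
  finally show ?thesis
    using assms commute[of _ d] by simp
qed

lemma linear_functional_on_form:
  assumes "r \<in> V"
  shows "linear_functional_on V (B r)"
  unfolding linear_functional_on_def
  using combine_right[OF _ _ assms, of _ _ 1] combine_right[OF zero_mem _ assms]
    combine_right[OF zero_mem zero_mem assms, of 1] by simp

lemma linear_functional_combine:
  "linear_functional_on V f \<Longrightarrow> a \<in> V \<Longrightarrow> b \<in> V \<Longrightarrow> f (\<lambda>y. a y + c *\<^sub>R b y) = f a + c * f b"
  unfolding linear_functional_on_def by (simp add: scale_mem)

lemma exists_orthogonal_at_new_coord:
  assumes repr: "\<And>f. linear_functional_on V f \<Longrightarrow>
      \<exists>r \<in> V \<inter> coord_fields P. \<forall>\<zeta> \<in> V \<inter> coord_fields P. B r \<zeta> = f \<zeta>"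
    and new: "(t, s) \<notin> P"
    and v: "v \<in> V \<inter> coord_fields (insert (t, s) P)" "v \<notin> coord_fields P"
  shows "\<exists>u \<in> V \<inter> coord_fields (insert (t, s) P). u t $ s \<noteq> 0 \<and>
    (\<forall>\<zeta> \<in> V \<inter> coord_fields P. B u \<zeta> = 0)"
proof -
  obtain q where q: "q \<in> V \<inter> coord_fields P" "\<forall>\<zeta> \<in> V \<inter> coord_fields P. B q \<zeta> = B v \<zeta>"
    using repr linear_functional_on_form v(1) by blast
  define u where "u = (\<lambda>y. v y + (-1) *\<^sub>R q y)"
  have "q t $ s = 0" "v t $ s \<noteq> 0"
    using q(1) new v unfolding coord_fields_def by auto
  then have "u t $ s \<noteq> 0"
    unfolding u_def by simp
  moreover have "u \<in> V \<inter> coord_fields (insert (t, s) P)"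
    unfolding u_def using q(1) v(1) coord_fields_mono[of P "insert (t, s) P"]
    by (intro IntI combine_mem coord_fields_combine) auto
  moreover have "\<forall>\<zeta> \<in> V \<inter> coord_fields P. B u \<zeta> = 0"
    unfolding u_def using q v(1) combine_left[of v q _ "-1"] by simp
  ultimately show ?thesis
    by blast
qed

lemma representation_extends_to_new_coord:
  assumes f: "linear_functional_on V f"
    and u: "u \<in> V \<inter> coord_fields (insert (t, s) P)" "u t $ s \<noteq> 0"
      "\<forall>\<zeta> \<in> V \<inter> coord_fields P. B u \<zeta> = 0"
    and w: "w \<in> V \<inter> coord_fields P" "\<forall>\<zeta> \<in> V \<inter> coord_fields P. B w \<zeta> = f \<zeta>"
  shows "\<exists>r \<in> V \<inter> coord_fields (insert (t, s) P).
    \<forall>\<zeta> \<in> V \<inter> coord_fields (insert (t, s) P). B r \<zeta> = f \<zeta>"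
proof -
  have "B u u \<noteq> 0"
    using definite u(1,2) by fastforce
  define c where "c = f u / B u u"
  define r where "r = (\<lambda>y. w y + c *\<^sub>R u y)"
  have r_mem: "r \<in> V \<inter> coord_fields (insert (t, s) P)"
    unfolding r_def using u(1) w(1) coord_fields_mono[of P "insert (t, s) P"]
    by (intro IntI combine_mem coord_fields_combine) auto
  have "B r u = B u w + c * B u u"
    unfolding r_def using u(1) w(1) by (simp add: combine_left commute[of w u])
  then have r_u: "B r u = f u"
    using u(3) w(1) \<open>B u u \<noteq> 0\<close> by (simp add: c_def)
  have "B r \<zeta> = f \<zeta>" if \<zeta>: "\<zeta> \<in> V \<inter> coord_fields (insert (t, s) P)" for \<zeta>
  proof -
    define k where "k = \<zeta> t $ s / u t $ s"
    define \<zeta>\<^sub>0 where "\<zeta>\<^sub>0 = (\<lambda>y. \<zeta> y + (-k) *\<^sub>R u y)"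
    have "\<zeta>\<^sub>0 \<in> V \<inter> coord_fields (insert (t, s) P)"
      unfolding \<zeta>\<^sub>0_def using \<zeta> u(1) by (intro IntI combine_mem coord_fields_combine) auto
    moreover have "\<zeta>\<^sub>0 t $ s = 0"
      unfolding \<zeta>\<^sub>0_def k_def using u(2) by simp
    ultimately
    have \<zeta>\<^sub>0: "\<zeta>\<^sub>0 \<in> V \<inter> coord_fields P"
      unfolding coord_fields_def by auto
    have \<zeta>_eq: "\<zeta> = (\<lambda>y. \<zeta>\<^sub>0 y + k *\<^sub>R u y)"
      unfolding \<zeta>\<^sub>0_def by simp
    have "B r \<zeta>\<^sub>0 = f \<zeta>\<^sub>0"
      unfolding r_def using u w \<zeta>\<^sub>0 by (simp add: combine_left)
    then have "B r \<zeta> = f \<zeta>\<^sub>0 + k * f u"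
      using r_mem u(1) \<zeta>\<^sub>0 r_u by (subst \<zeta>_eq) (simp add: combine_right)
    also have "\<dots> = f \<zeta>"
      using linear_functional_combine[OF f, of \<zeta>\<^sub>0 u k] u(1) \<zeta>\<^sub>0 \<zeta>_eq by simp
    finally show ?thesis .
  qed
  then show ?thesis
    using r_mem by blast
qed

lemma representation_on_coord_fields:
  assumes "finite P" and "linear_functional_on V f"
  shows "\<exists>r \<in> V \<inter> coord_fields P. \<forall>\<zeta> \<in> V \<inter> coord_fields P. B r \<zeta> = f \<zeta>"
  using assms
proof (induction P arbitrary: f rule: finite_induct)
  case empty
  have "V \<inter> coord_fields {} = {\<lambda>y. 0}"
    using zero_mem by (auto simp: coord_fields_def vec_eq_iff)
  moreover have "f (\<lambda>y. 0) = 0"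
    using linear_functional_combine[OF empty zero_mem zero_mem, of 1] by simp
  moreover have "B (\<lambda>y. 0) (\<lambda>y. 0) = 0"
    using combine_left[OF zero_mem zero_mem zero_mem, of 1] by simp
  ultimately show ?case
    by simp
next
  case (insert p P)
  obtain t s where p: "p = (t, s)"
    by force
  show ?case
  proof (cases "V \<inter> coord_fields (insert p P) \<subseteq> coord_fields P")
    case True
    then have "V \<inter> coord_fields (insert p P) = V \<inter> coord_fields P"
      using coord_fields_mono[of P "insert p P"] by blast
    then show ?thesis
      using insert by simp
  next
    case False
    then obtain v where "v \<in> V \<inter> coord_fields (insert (t, s) P)" "v \<notin> coord_fields P"
      unfolding p by blast
    then obtain u where "u \<in> V \<inter> coord_fields (insert (t, s) P)" "u t $ s \<noteq> 0"
      "\<forall>\<zeta> \<in> V \<inter> coord_fields P. B u \<zeta> = 0"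
      using exists_orthogonal_at_new_coord[OF insert.IH] insert.hyps(2) p by blast
    moreover obtain w where "w \<in> V \<inter> coord_fields P" "\<forall>\<zeta> \<in> V \<inter> coord_fields P. B w \<zeta> = f \<zeta>"
      using insert.IH insert.prems by blast
    ultimately show ?thesis
      unfolding p by (rule representation_extends_to_new_coord[OF insert.prems])
  qed
qed

theorem riesz_representation:
  assumes "finite P" and "V \<subseteq> coord_fields P" and "linear_functional_on V f"
  shows "\<exists>!r. r \<in> V \<and> (\<forall>\<zeta> \<in> V. B r \<zeta> = f \<zeta>)"
proof (rule ex_ex1I)
  show "\<exists>r. r \<in> V \<and> (\<forall>\<zeta> \<in> V. B r \<zeta> = f \<zeta>)"
    using representation_on_coord_fields[OF assms(1,3)] assms(2) by (auto simp: Int_absorb2)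
next
  fix r r' assume r: "r \<in> V \<and> (\<forall>\<zeta> \<in> V. B r \<zeta> = f \<zeta>)" and r': "r' \<in> V \<and> (\<forall>\<zeta> \<in> V. B r' \<zeta> = f \<zeta>)"
  define d where "d = (\<lambda>y. r y + (-1) *\<^sub>R r' y)"
  have "d \<in> V"
    unfolding d_def using r r' by (intro combine_mem) auto
  moreover have "B d \<zeta> = 0" if "\<zeta> \<in> V" for \<zeta>
    unfolding d_def using r r' that combine_left[of r r' \<zeta> "-1"] by simp
  ultimately have "B d d = 0"
    by blast
  then have "d = (\<lambda>y. 0)"
    using definite \<open>d \<in> V\<close> by blast
  then show "r = r'"
    unfolding d_def by (auto simp: fun_eq_iff dest: fun_cong)
qed

end

section \<open>The discrete torus\<close>

lemma finite_torus: "finite (torus M :: (int^'d) set)"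
proof -
  have "torus M \<subseteq> vec_lambda ` (PiE UNIV (\<lambda>_::'d. {0..<M}))"
  proof
    fix x :: "int^'d"
    assume "x \<in> torus M"
    then have "($) x \<in> PiE UNIV (\<lambda>_. {0..<M})"
      by (auto simp: torus_def)
    then show "x \<in> vec_lambda ` (PiE UNIV (\<lambda>_::'d. {0..<M}))"
      by (metis image_eqI vec_lambda_eta)
  qed
  then show ?thesis
    by (rule finite_subset) (intro finite_imageI finite_PiE; simp)
qed

lemma tadd_in_torus: "M > 0 \<Longrightarrow> tadd M x y \<in> torus M"
  by (simp add: tadd_def torus_def)

lemma zero_in_torus: "M > 0 \<Longrightarrow> 0 \<in> torus M"
  by (simp add: torus_def)

lemma tadd_zero_right: "x \<in> torus M \<Longrightarrow> tadd M x 0 = x"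
  by (simp add: tadd_def torus_def vec_eq_iff)

lemma tadd_nth: "tadd M u v $ i = u$i + v$i - M * ((u$i + v$i) div M)"
  by (simp add: tadd_def minus_mult_div_eq_mod)

lemma torus_step_back:
  assumes x: "x \<in> torus M" and j: "0 < x$j"
  shows "x - axis j 1 \<in> torus M" and "tadd M (x - axis j 1) (axis j 1) = x"
proof -
  have bounds: "0 \<le> x$i" "x$i < M" for i
    using x by (auto simp: torus_def)
  have comp: "(x - axis j 1)$i = x$i - (if i = j then 1 else 0)" for i
    by (simp add: axis_def)
  show "x - axis j 1 \<in> torus M"
    unfolding torus_def
  proof (intro CollectI allI)
    fix i
    show "0 \<le> (x - axis j 1)$i \<and> (x - axis j 1)$i < M"
      using bounds[of i] j by (cases "i = j") (simp_all add: comp axis_def)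
  qed
  show "tadd M (x - axis j 1) (axis j 1) = x"
    using bounds by (simp add: tadd_def vec_eq_iff comp axis_def mod_pos_pos_trivial)
qed

lemma shift_invariant_const_on_torus:
  assumes M: "M > 0" and step: "\<forall>x \<in> torus M. \<forall>j. \<phi> (tadd M x (axis j 1)) = \<phi> x"
    and x: "x \<in> torus M"
  shows "\<phi> x = \<phi> 0"
  using x
proof (induction "\<Sum>j\<in>UNIV. nat (x$j)" arbitrary: x rule: less_induct)
  case less
  show ?case
  proof (cases "x = 0")
    case False
    then obtain j where "x$j \<noteq> 0"
      by (auto simp: vec_eq_iff)
    with less.prems have j: "0 < x$j"
      by (auto simp: torus_def order_le_less)
    let ?x' = "x - axis j 1"
    have "(\<Sum>i\<in>UNIV. nat (?x'$i)) < (\<Sum>i\<in>UNIV. nat (x$i))"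
      using j by (intro sum_strict_mono_ex1) (auto simp: axis_def)
    then have "\<phi> ?x' = \<phi> 0"
      using less.hyps torus_step_back(1)[OF less.prems j] by blast
    then show ?thesis
      using step torus_step_back[OF less.prems j] by metis
  qed simp
qed

section \<open>The energy form and the scalar product\<close>

lemma grad_add: "grad M (\<lambda>y. a y + b y) x = grad M a x + grad M b x"
  by (simp add: grad_def vec_eq_iff)

lemma grad_scale: "grad M (\<lambda>y. c *\<^sub>R a y) x = c *\<^sub>R grad M a x"
  by (simp add: grad_def vec_eq_iff algebra_simps)

lemma grad_diff: "grad M (\<lambda>y. a y - b y) x = grad M a x - grad M b x"
  by (simp add: grad_def vec_eq_iff)

lemma ipA_zero_left: "linear A \<Longrightarrow> ipA M A (\<lambda>y. 0) b = 0"
  unfolding ipA_def grad_def by (simp add: linear_0 zero_vec_def[symmetric])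

lemma ipA_add_left: "linear A \<Longrightarrow> ipA M A (\<lambda>y. a y + b y) c = ipA M A a c + ipA M A b c"
  unfolding ipA_def by (simp add: grad_add linear_add inner_add_left sum.distrib)

lemma ipA_scale_left: "linear A \<Longrightarrow> ipA M A (\<lambda>y. k *\<^sub>R a y) c = k * ipA M A a c"
  unfolding ipA_def by (simp add: grad_scale linear_scale sum_distrib_left)

lemma ipA_diff_left: "linear A \<Longrightarrow> ipA M A (\<lambda>y. a y - b y) c = ipA M A a c - ipA M A b c"
  unfolding ipA_def by (simp add: grad_diff linear_diff inner_diff_left sum_subtractf)

lemma ipA_add_right: "ipA M A c (\<lambda>y. a y + b y) = ipA M A c a + ipA M A c b"
  unfolding ipA_def by (simp add: grad_add inner_add_right sum.distrib)

lemma ipA_scale_right: "ipA M A c (\<lambda>y. k *\<^sub>R a y) = k * ipA M A c a"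
  unfolding ipA_def by (simp add: grad_scale sum_distrib_left)

lemma linear_functional_on_ipA: "linear_functional_on V (ipA M A \<phi>)"
  unfolding linear_functional_on_def by (simp add: ipA_add_right ipA_scale_right)

lemma ipA_commute: "\<forall>F G. A F \<bullet> G = F \<bullet> A G \<Longrightarrow> ipA M A a b = ipA M A b a"
  unfolding ipA_def by (rule sum.cong) (auto simp: inner_commute)

lemma ipA_self_eq_0_imp_zero:
  fixes a :: "int^'d \<Rightarrow> real^'m"
  assumes M: "M > 0" and pos: "\<forall>F. F \<noteq> 0 \<longrightarrow> A F \<bullet> F > 0"
    and a: "a \<in> XN M" and a0: "ipA M A a a = 0"
  shows "a = (\<lambda>y. 0)"
proof -
  have "0 \<le> A F \<bullet> F" for F
    using pos by (cases "F = 0") (auto intro: less_imp_le)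
  then have "\<forall>x \<in> torus M. A (grad M a x) \<bullet> grad M a x = 0"
    using a0 unfolding ipA_def by (subst (asm) sum_nonneg_eq_0_iff) (auto simp: finite_torus)
  then have "\<forall>x \<in> torus M. grad M a x = 0"
    using pos by (metis less_irrefl)
  then have "\<forall>x \<in> torus M. \<forall>j. a (tadd M x (axis j 1)) = a x"
    by (auto simp: grad_def vec_eq_iff)
  then have const: "\<forall>x \<in> torus M. a x = a 0"
    using shift_invariant_const_on_torus[OF M] by blast
  have "real (card (torus M :: (int^'d) set)) *\<^sub>R a 0 = (\<Sum>x\<in>torus M. a x)"
    using const by (simp add: scaleR_conv_of_real)
  also have "\<dots> = 0"
    using a by (simp add: XN_def)
  moreover have "card (torus M :: (int^'d) set) \<noteq> 0"
    using finite_torus zero_in_torus[OF M] by (metis card_0_eq empty_iff)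
  ultimately have "a 0 = 0"
    by simp
  then show ?thesis
    using const a by (auto simp: XN_def fun_eq_iff)
qed

lemma ip_add_left: "ip M (\<lambda>y. a y + b y) c = ip M a c + ip M b c"
  unfolding ip_def by (simp add: inner_add_left sum.distrib)

lemma ip_scale_left: "ip M (\<lambda>y. k *\<^sub>R a y) c = k * ip M a c"
  unfolding ip_def by (simp add: sum_distrib_left)

lemma ip_diff_left: "ip M (\<lambda>y. a y - b y) c = ip M a c - ip M b c"
  unfolding ip_def by (simp add: inner_diff_left sum_subtractf)

lemma ip_add_right: "ip M c (\<lambda>y. a y + b y) = ip M c a + ip M c b"
  unfolding ip_def by (simp add: inner_add_right sum.distrib)

lemma ip_scale_right: "ip M c (\<lambda>y. k *\<^sub>R a y) = k * ip M c a"
  unfolding ip_def by (simp add: sum_distrib_left)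

lemma ip_commute: "ip M a b = ip M b a"
  unfolding ip_def by (simp add: inner_commute)

lemma ip_self_eq_0_imp_zero: "a \<in> XN M \<Longrightarrow> ip M a a = 0 \<Longrightarrow> a = (\<lambda>y. 0)"
  unfolding ip_def XN_def
  by (subst (asm) sum_nonneg_eq_0_iff) (auto simp: finite_torus fun_eq_iff)

lemma XN_zero: "(\<lambda>y. 0) \<in> XN M"
  unfolding XN_def by simp

lemma XN_add: "a \<in> XN M \<Longrightarrow> b \<in> XN M \<Longrightarrow> (\<lambda>y. a y + b y) \<in> XN M"
  unfolding XN_def by (simp add: sum.distrib)

lemma XN_scale: "a \<in> XN M \<Longrightarrow> (\<lambda>y. c *\<^sub>R a y) \<in> XN M"
  unfolding XN_def by (simp add: scaleR_sum_right[symmetric])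

lemma Hloc_zero: "(\<lambda>y. 0) \<in> Hloc M l x"
  unfolding Hloc_def by (simp add: XN_zero)

lemma Hloc_add: "a \<in> Hloc M l x \<Longrightarrow> b \<in> Hloc M l x \<Longrightarrow> (\<lambda>y. a y + b y) \<in> Hloc M l x"
  unfolding Hloc_def by (simp add: XN_add)

lemma Hloc_scale: "a \<in> Hloc M l x \<Longrightarrow> (\<lambda>y. c *\<^sub>R a y) \<in> Hloc M l x"
  unfolding Hloc_def by (simp add: XN_scale)

lemma XN_coord_fields: "XN M \<subseteq> coord_fields (torus M \<times> UNIV)"
  unfolding XN_def coord_fields_def by (auto simp: vec_eq_iff)

lemma Hloc_subset_XN: "Hloc M l x \<subseteq> XN M"
  unfolding Hloc_def by auto

lemma sym_pos_form_XN_ip: "sym_pos_form (XN M) (ip M)"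
  by unfold_locales
    (simp_all add: XN_zero XN_add XN_scale ip_add_left ip_scale_left ip_commute[of M]
      ip_self_eq_0_imp_zero)

lemma sym_pos_form_Hloc_ipA:
  assumes "M > 0" and "linear A" and "\<forall>F G. A F \<bullet> G = F \<bullet> A G"
    and "\<forall>F. F \<noteq> 0 \<longrightarrow> A F \<bullet> F > 0"
  shows "sym_pos_form (Hloc M l x) (ipA M A)"
proof unfold_locales
  show "\<And>a. a \<in> Hloc M l x \<Longrightarrow> ipA M A a a = 0 \<Longrightarrow> a = (\<lambda>y. 0)"
    using assms(1,4) Hloc_subset_XN ipA_self_eq_0_imp_zero by blast
qed (use assms(2,3) in \<open>simp_all add: Hloc_zero Hloc_add Hloc_scale ipA_add_left ipA_scale_left
      ipA_commute[of A M]\<close>)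

section \<open>Distances on the torus\<close>

lemma rho_inf_le:
  fixes q b w :: "int^'d"
  assumes "\<forall>i. M dvd w$i" and "\<forall>i. \<bar>q$i - b$i + w$i\<bar> \<le> c"
  shows "rho_inf M q b \<le> c"
proof -
  let ?S = "{Max (range (\<lambda>j. \<bar>q$j - b$j + z$j\<bar>)) | z::int^'d. \<forall>j. M dvd z$j}"
  have "bdd_below ?S"
    by (rule bdd_belowI[of _ 0]) (auto simp: Max_ge_iff)
  moreover have "Max (range (\<lambda>j. \<bar>q$j - b$j + w$j\<bar>)) \<in> ?S"
    using assms(1) by blast
  ultimately have "rho_inf M q b \<le> Max (range (\<lambda>j. \<bar>q$j - b$j + w$j\<bar>))"
    unfolding rho_inf_def by (rule cInf_lower[rotated])
  also have "\<dots> \<le> c"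
    using assms(2) by (subst Max_le_iff) auto
  finally show ?thesis .
qed

lemma rho_inf_commute:
  fixes q b :: "int^'d"
  shows "rho_inf M q b = rho_inf M b q"
proof -
  define S where "S q b = {Max (range (\<lambda>j. \<bar>q$j - b$j + z$j\<bar>)) | z::int^'d. \<forall>j. M dvd z$j}"
    for q b :: "int^'d"
  have "S q b \<subseteq> S b q" for q b
  proof
    fix e
    assume "e \<in> S q b"
    then obtain z where e: "e = Max (range (\<lambda>j. \<bar>q$j - b$j + z$j\<bar>))" and z: "\<forall>j. M dvd z$j"
      unfolding S_def by blast
    have "e = Max (range (\<lambda>j. \<bar>b$j - q$j + (-z)$j\<bar>))"
      unfolding e by (rule arg_cong[where f = "\<lambda>f. Max (range f)"]) (rule ext, simp)
    moreover have "\<forall>j. M dvd (-z)$j"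
      using z by simp
    ultimately show "e \<in> S b q"
      unfolding S_def by blast
  qed
  moreover have "rho_inf M q b = Inf (S q b)" for q b
    unfolding rho_inf_def S_def ..
  ultimately show ?thesis
    by (metis subset_antisym)
qed

lemma dist_inf_le_rho_inf:
  assumes "finite S1" and "finite S2" and "q \<in> S1" and "b \<in> S2"
  shows "dist_inf M S1 S2 \<le> rho_inf M q b"
proof -
  have "{rho_inf M x y | x y. x \<in> S1 \<and> y \<in> S2} = (\<lambda>(x, y). rho_inf M x y) ` (S1 \<times> S2)"
    by auto
  then have "finite {rho_inf M x y | x y. x \<in> S1 \<and> y \<in> S2}"
    using assms(1,2) by simp
  then show ?thesis
    unfolding dist_inf_def using assms(3,4) by (intro Min_le) blast+
qed

lemma grad_neq_0_imp_vertex: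
  assumes "z \<in> torus M" and "grad M f z \<noteq> 0"
  obtains d :: "int^'d" where "\<forall>i. d$i = 0 \<or> d$i = 1" and "f (tadd M z d) \<noteq> 0"
proof -
  obtain r j where "f (tadd M z (axis j 1)) $ r \<noteq> f z $ r"
    using assms(2) unfolding grad_def by (auto simp: vec_eq_iff)
  then have "f (tadd M z (axis j 1)) \<noteq> 0 \<or> f (tadd M z 0) \<noteq> 0"
    using tadd_zero_right[OF assms(1)] by auto
  moreover have "\<forall>i. (axis j 1 :: int^'d)$i = 0 \<or> (axis j 1 :: int^'d)$i = 1"
    by (simp add: axis_def)
  ultimately show ?thesis
    using that[of 0] that[of "axis j 1"] by auto
qed

text \<open>Modulo \<open>M\<close>, \<open>(z + e) - (\<beta> + x) = (\<pi> - \<beta>) + (e - d)\<close>, where \<open>|\<pi>\<^sub>i - \<beta>\<^sub>i| \<le> l - 2\<close> because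
  \<open>Q = {1..l-1}\<^sup>d\<close> and \<open>|e\<^sub>i - d\<^sub>i| \<le> 1\<close>; this yields the period vector \<open>w\<close> below.\<close>
lemma rho_inf_shifted_cube_le:
  fixes x z d e \<beta> \<pi> :: "int^'d"
  assumes \<beta>: "\<beta> \<in> cubeQ l" and \<pi>: "\<pi> \<in> cubeQ l" and p: "tadd M z d = tadd M \<pi> x"
    and d: "\<forall>i. d$i = 0 \<or> d$i = 1" and e: "\<forall>i. e$i = 0 \<or> e$i = 1"
  shows "rho_inf M (tadd M z e) (tadd M \<beta> x) \<le> int l - 1"
proof (rule rho_inf_le)
  let ?q = "tadd M z e" and ?b = "tadd M \<beta> x"
  define w :: "int^'d" where "w = (\<chi> i. (\<pi>$i - \<beta>$i + e$i - d$i) - (?q$i - ?b$i))"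
  show "\<forall>i. M dvd w$i"
  proof
    fix i
    have "tadd M z d $ i = tadd M \<pi> x $ i"
      using p by simp
    then have "w$i = M * ((z$i + e$i) div M - (\<beta>$i + x$i) div M - (z$i + d$i) div M + (\<pi>$i + x$i) div M)"
      unfolding w_def tadd_nth by (simp add: algebra_simps)
    then show "M dvd w$i"
      by simp
  qed
  show "\<forall>i. \<bar>?q$i - ?b$i + w$i\<bar> \<le> int l - 1"
    using \<beta> \<pi> d e by (auto simp: w_def cubeQ_def) (smt (verit))
qed

definition supports_apart :: "int \<Rightarrow> nat \<Rightarrow> (int^'d \<Rightarrow> real^'m) \<Rightarrow> (int^'d \<Rightarrow> real^'m) \<Rightarrow> bool"
  where "supports_apart M l \<phi> \<psi> \<longleftrightarrow> (\<forall>q \<in> supp M \<phi>. \<forall>b \<in> supp M \<psi>. int l - 1 < rho_inf M q b)"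

lemma supports_apart_commute: "supports_apart M l \<phi> \<psi> \<Longrightarrow> supports_apart M l \<psi> \<phi>"
  unfolding supports_apart_def by (metis rho_inf_commute)

lemma finite_supp: "finite (supp M \<phi>)"
  by (rule finite_subset[OF _ finite_torus]) (auto simp: supp_def)

lemma supports_apart_if_dist_inf:
  "int l - 1 < dist_inf M (supp M \<phi>) (supp M \<psi>) \<Longrightarrow> supports_apart M l \<phi> \<psi>"
  unfolding supports_apart_def using dist_inf_le_rho_inf[OF finite_supp finite_supp]
  by (meson less_le_trans)

lemma ip_eq_0_if_apart:
  fixes \<phi> \<psi> :: "int^'d \<Rightarrow> real^'m"
  assumes "l \<ge> 1" and apart: "supports_apart M l \<phi> \<psi>"
  shows "ip M \<phi> \<psi> = 0"
  unfolding ip_def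
proof (intro sum.neutral ballI)
  fix y :: "int^'d"
  assume "y \<in> torus M"
  moreover have "rho_inf M y y \<le> int l - 1"
    using assms(1) by (intro rho_inf_le[of M 0]) auto
  ultimately show "\<phi> y \<bullet> \<psi> y = 0"
    using apart unfolding supports_apart_def supp_def by fastforce
qed

section \<open>Local projections and the operator \<open>T\<close>\<close>

locale torus_energy =
  fixes M :: int and A :: "real^'d^'m \<Rightarrow> real^'d^'m"
  assumes M_pos: "M > 0" and A_linear: "linear A" and A_sym: "\<forall>F G. A F \<bullet> G = F \<bullet> A G"
    and A_pos: "\<forall>F. F \<noteq> 0 \<longrightarrow> A F \<bullet> F > 0"
begin

lemma Pi_proj_ex1: "\<exists>!\<psi>. \<psi> \<in> Hloc M l x \<and> (\<forall>\<zeta> \<in> Hloc M l x. ipA M A \<psi> \<zeta> = ipA M A \<phi> \<zeta>)"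
proof (rule sym_pos_form.riesz_representation[OF sym_pos_form_Hloc_ipA[OF M_pos A_linear A_sym A_pos]])
  show "finite (torus M \<times> (UNIV :: 'm set))"
    by (simp add: finite_torus)
  show "Hloc M l x \<subseteq> coord_fields (torus M \<times> UNIV)"
    using Hloc_subset_XN XN_coord_fields by blast
qed (rule linear_functional_on_ipA)

lemma Pi_proj: "Pi_proj M l A x \<phi> \<in> Hloc M l x"
  and ipA_Pi_proj: "\<zeta> \<in> Hloc M l x \<Longrightarrow> ipA M A (Pi_proj M l A x \<phi>) \<zeta> = ipA M A \<phi> \<zeta>"
proof -
  have orth_iff: "(\<forall>\<zeta> \<in> Hloc M l x. ipA M A (\<lambda>y. \<phi> y - \<psi> y) \<zeta> = 0) \<longleftrightarrow>
      (\<forall>\<zeta> \<in> Hloc M l x. ipA M A \<psi> \<zeta> = ipA M A \<phi> \<zeta>)" for \<psi>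
    by (auto simp: ipA_diff_left[OF A_linear])
  have "Pi_proj M l A x \<phi> \<in> Hloc M l x \<and>
      (\<forall>\<zeta> \<in> Hloc M l x. ipA M A (Pi_proj M l A x \<phi>) \<zeta> = ipA M A \<phi> \<zeta>)"
    unfolding Pi_proj_def orth_iff by (rule theI'[OF Pi_proj_ex1])
  then show "Pi_proj M l A x \<phi> \<in> Hloc M l x"
    and "\<zeta> \<in> Hloc M l x \<Longrightarrow> ipA M A (Pi_proj M l A x \<phi>) \<zeta> = ipA M A \<phi> \<zeta>"
    by auto
qed

lemma Pi_proj_eqI:
  "\<psi> \<in> Hloc M l x \<Longrightarrow> (\<And>\<zeta>. \<zeta> \<in> Hloc M l x \<Longrightarrow> ipA M A \<psi> \<zeta> = ipA M A \<phi> \<zeta>) \<Longrightarrow>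
    Pi_proj M l A x \<phi> = \<psi>"
  using Pi_proj_ex1[of l x \<phi>] Pi_proj ipA_Pi_proj by blast

lemma Pi_proj_add:
  "Pi_proj M l A x (\<lambda>y. a y + b y) = (\<lambda>y. Pi_proj M l A x a y + Pi_proj M l A x b y)"
  by (intro Pi_proj_eqI Hloc_add Pi_proj) (simp add: ipA_add_left[OF A_linear] ipA_Pi_proj)

lemma Pi_proj_scale: "Pi_proj M l A x (\<lambda>y. k *\<^sub>R a y) = (\<lambda>y. k *\<^sub>R Pi_proj M l A x a y)"
  by (intro Pi_proj_eqI Hloc_scale Pi_proj) (simp add: ipA_scale_left[OF A_linear] ipA_Pi_proj)

lemma opT_add: "opT M l A (\<lambda>y. a y + b y) = (\<lambda>y. opT M l A a y + opT M l A b y)"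
  unfolding opT_def by (simp add: Pi_proj_add sum.distrib scaleR_add_right)

lemma opT_scale: "opT M l A (\<lambda>y. k *\<^sub>R a y) = (\<lambda>y. k *\<^sub>R opT M l A a y)"
  unfolding opT_def by (simp add: Pi_proj_scale scaleR_sum_right[symmetric])

lemma opT'_ex1: "\<exists>!\<eta>. \<eta> \<in> XN M \<and> (\<forall>\<psi> \<in> XN M. ip M \<eta> \<psi> = ip M \<phi> (opT M l A \<psi>))"
proof (rule sym_pos_form.riesz_representation[OF sym_pos_form_XN_ip])
  show "finite (torus M \<times> (UNIV :: 'm set))"
    by (simp add: finite_torus)
  show "linear_functional_on (XN M) (\<lambda>\<psi>. ip M \<phi> (opT M l A \<psi>))"
    unfolding linear_functional_on_def by (simp add: opT_add opT_scale ip_add_right ip_scale_right)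
qed (rule XN_coord_fields)

lemma ip_opT'_eq: "\<psi> \<in> XN M \<Longrightarrow> ip M (opT' M l A \<phi>) \<psi> = ip M \<phi> (opT M l A \<psi>)"
  using theI'[OF opT'_ex1[of \<phi> l]] unfolding opT'_def by blast

lemma ipA_eq_0_if_far_from_cube:
  assumes far: "\<forall>q \<in> supp M \<phi>. int l - 1 < rho_inf M q b"
    and b: "b \<in> shiftQ M l x" and \<zeta>: "\<zeta> \<in> Hloc M l x"
  shows "ipA M A \<phi> \<zeta> = 0"
  unfolding ipA_def
proof (intro sum.neutral ballI)
  fix z :: "int^'d"
  assume z: "z \<in> torus M"
  obtain \<beta> where \<beta>: "\<beta> \<in> cubeQ l" "b = tadd M \<beta> x"
    using b unfolding shiftQ_def by blast
  show "A (grad M \<phi> z) \<bullet> grad M \<zeta> z = 0"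
  proof (rule ccontr)
    assume nz: "A (grad M \<phi> z) \<bullet> grad M \<zeta> z \<noteq> 0"
    then have "grad M \<phi> z \<noteq> 0" and "grad M \<zeta> z \<noteq> 0"
      using linear_0[OF A_linear] by auto
    then obtain e d :: "int^'d" where e: "\<forall>i. e$i = 0 \<or> e$i = 1" "\<phi> (tadd M z e) \<noteq> 0"
      and d: "\<forall>i. d$i = 0 \<or> d$i = 1" "\<zeta> (tadd M z d) \<noteq> 0"
      using grad_neq_0_imp_vertex[OF z] by metis
    have "tadd M z d \<in> shiftQ M l x"
      using \<zeta> d(2) tadd_in_torus[OF M_pos] unfolding Hloc_def by blast
    then obtain \<pi> where "\<pi> \<in> cubeQ l" "tadd M z d = tadd M \<pi> x"
      unfolding shiftQ_def by blast
    then have "rho_inf M (tadd M z e) b \<le> int l - 1"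
      using rho_inf_shifted_cube_le \<beta> d(1) e(1) by blast
    moreover have "tadd M z e \<in> supp M \<phi>"
      using e(2) tadd_in_torus[OF M_pos] unfolding supp_def by blast
    ultimately show False
      using far by fastforce
  qed
qed

lemma ip_Pi_proj_eq_0_if_apart:
  assumes apart: "supports_apart M l \<phi> \<psi>"
  shows "ip M (Pi_proj M l A x \<phi>) \<psi> = 0"
proof (cases "supp M \<psi> \<inter> shiftQ M l x = {}")
  case True
  show ?thesis
    unfolding ip_def
  proof (intro sum.neutral ballI)
    fix y :: "int^'d"
    assume y: "y \<in> torus M"
    show "Pi_proj M l A x \<phi> y \<bullet> \<psi> y = 0"
    proof (cases "y \<in> shiftQ M l x")
      case True
      then have "\<psi> y = 0"
        using \<open>supp M \<psi> \<inter> shiftQ M l x = {}\<close> y unfolding supp_def by blast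
      then show ?thesis
        by simp
    next
      case False
      then have "Pi_proj M l A x \<phi> y = 0"
        using Pi_proj y unfolding Hloc_def by blast
      then show ?thesis
        by simp
    qed
  qed
next
  case False
  then obtain b where b: "b \<in> supp M \<psi>" "b \<in> shiftQ M l x"
    by blast
  have "Pi_proj M l A x \<phi> = (\<lambda>y. 0)"
  proof (rule Pi_proj_eqI[OF Hloc_zero])
    fix \<zeta> :: "int^'d \<Rightarrow> real^'m"
    assume "\<zeta> \<in> Hloc M l x"
    then have "ipA M A \<phi> \<zeta> = 0"
      using apart b unfolding supports_apart_def
      by (intro ipA_eq_0_if_far_from_cube[of \<phi> l b x]) auto
    then show "ipA M A (\<lambda>y. 0) \<zeta> = ipA M A \<phi> \<zeta>"
      by (simp add: ipA_zero_left[OF A_linear])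
  qed
  then show ?thesis
    by (simp add: ip_def)
qed

lemma ip_opT_eq_0_if_apart:
  assumes "supports_apart M l \<phi> \<psi>"
  shows "ip M (opT M l A \<phi>) \<psi> = 0"
proof -
  have "ip M (opT M l A \<phi>) \<psi> =
      (1 / real l ^ CARD('d)) * (\<Sum>y\<in>torus M. \<Sum>x\<in>torus M. Pi_proj M l A x \<phi> y \<bullet> \<psi> y)"
    unfolding ip_def opT_def by (simp add: inner_sum_left sum_distrib_left)
  also have "(\<Sum>y\<in>torus M. \<Sum>x\<in>torus M. Pi_proj M l A x \<phi> y \<bullet> \<psi> y) =
      (\<Sum>x\<in>torus M. ip M (Pi_proj M l A x \<phi>) \<psi>)"
    unfolding ip_def by (rule sum.swap)
  finally show ?thesis
    using ip_Pi_proj_eq_0_if_apart[OF assms] by simp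
qed

end

theorem lemma3p6:
  fixes L N l :: nat
    and A :: "real^'d^'m \<Rightarrow> real^'d^'m"
    and \<phi> \<psi> :: "int^'d \<Rightarrow> real^'m"
  assumes "odd L" and "L \<ge> 3" and "N \<ge> 1" and "CARD('d) \<ge> 2"
    and "l \<ge> 3" and "int l - 1 < int L ^ N"
    and "linear A"
    and "\<forall>F G. A F \<bullet> G = F \<bullet> A G"
    and "\<forall>F. F \<noteq> 0 \<longrightarrow> A F \<bullet> F > 0"
    and "\<phi> \<in> XN (int L ^ N)" and "\<psi> \<in> XN (int L ^ N)"
    and "dist_inf (int L ^ N) (supp (int L ^ N) \<phi>) (supp (int L ^ N) \<psi>) > int l - 1"
  shows "ip (int L ^ N) (opT (int L ^ N) l A \<phi>) \<psi> = 0
       \<and> ip (int L ^ N) (opT' (int L ^ N) l A \<phi>) \<psi> = 0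
       \<and> ip (int L ^ N) (opR (int L ^ N) l A \<phi>) \<psi> = 0
       \<and> ip (int L ^ N) (opR' (int L ^ N) l A \<phi>) \<psi> = 0"
proof -
  let ?M = "int L ^ N"
  interpret torus_energy ?M A
    using assms(2,7-9) by (intro torus_energy.intro) simp_all
  have apart: "supports_apart ?M l \<phi> \<psi>"
    using assms(12) by (rule supports_apart_if_dist_inf)
  have T: "ip ?M (opT ?M l A \<phi>) \<psi> = 0"
    using ip_opT_eq_0_if_apart[OF apart] .
  have "ip ?M (opT' ?M l A \<phi>) \<psi> = ip ?M (opT ?M l A \<psi>) \<phi>"
    using ip_opT'_eq[OF assms(11)] ip_commute by metis
  also have "\<dots> = 0"
    using ip_opT_eq_0_if_apart[OF supports_apart_commute[OF apart]] .
  finally have T': "ip ?M (opT' ?M l A \<phi>) \<psi> = 0" .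
  have "ip ?M \<phi> \<psi> = 0"
    using ip_eq_0_if_apart[OF _ apart] assms(5) by simp
  then show ?thesis
    using T T' by (simp add: opR_def opR'_def ip_diff_left)
qed

end
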